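(* Let $\Omega\subset\mathbb H^n$ be an open set and let $u:\Omega\to\mathbb R$ be continuous with $\partial_Hu(\xi)\neq\emptyset$ for every $\xi\in\Omega$. Then the set-valued map $\partial_Hu:\Omega\to 2^{\mathbb R^{2n}}$ is upper semicontinuous on $\Omega$. Moreover, for every compact set $K\subset\Omega$, the set $\partial_Hu(K)$ is compact.
   Context: $\mathbb H^n=\mathbb C^n\times\mathbb R\cong\mathbb R^{2n+1}$ with real coordinates $(x,y,t)$, $z=x+iy$, group law $(z,t)\circ(z',t')=(z+z',t+t'+2\,\mathrm{Im}\langle z,z'\rangle)$, $\langle z,z'\rangle=\sum_j z_j\overline{z'_j}$. Horizontal plane at $\xi_0=(x_0,y_0,t_0)$: $H_{\xi_0}=\{(x,y,t):t=t_0+2(x\cdot y_0-x_0\cdot y)\}$. $\mathrm{Pr}_1(x,y,t)=(x,y)$. For $\xi_0\in\Omega$, $\partial_Hu(\xi_0)=\{p\in\mathbb R^{2n}:u(\xi)\ge u(\xi_0)+p\cdot(\mathrm{Pr}_1(\xi)-\mathrm{Pr}_1(\xi_0))\ \forall\xi\in\Omega\cap H_{\xi_0}\}$ (a compact convex set), and $\partial_Hu(K)=\bigcup_{\xi\in K}\partial_Hu(\xi)$. A set-valued map $F$ with nonempty compact values is upper semicontinuous at $x$ if for every $\varepsilon>0$ there is $\delta>0$ such that $F(x')$ is contained in the $\varepsilon$-neighbourhood of $F(x)$ whenever $x'$ is within distance $\delta$ of $x$. *)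

theory Defs
  imports "HOL-Analysis.Analysis"
begin

text \<open>Points of the Heisenberg group H^n = C^n x R, with real coordinates (x,y,t),
  x,y in R^n (index type 'n), t in R.  R^{2n} is rendered as real^'n x real^'n,
  whose inner product is p . q = p1 . q1 + p2 . q2.\<close>

type_synonym 'n heis = "(real^'n) \<times> (real^'n) \<times> real"

definition Pr1 :: "'n::finite heis \<Rightarrow> (real^'n) \<times> (real^'n)" where
  "Pr1 \<xi> = (fst \<xi>, fst (snd \<xi>))"

definition horiz_plane :: "'n::finite heis \<Rightarrow> 'n heis set" where
  "horiz_plane \<xi>0 = {(x, y, t). t = snd (snd \<xi>0)
      + 2 * (x \<bullet> fst (snd \<xi>0) - fst \<xi>0 \<bullet> y)}"

definition H_subdiff ::
  "'n::finite heis set \<Rightarrow> ('n heis \<Rightarrow> real) \<Rightarrow> 'n heis \<Rightarrow> ((real^'n) \<times> (real^'n)) set" where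
  "H_subdiff \<Omega> u \<xi>0 = {p. \<forall>\<xi> \<in> \<Omega> \<inter> horiz_plane \<xi>0.
      u \<xi> \<ge> u \<xi>0 + p \<bullet> (Pr1 \<xi> - Pr1 \<xi>0)}"

definition eps_nbhd :: "real \<Rightarrow> 'a::metric_space set \<Rightarrow> 'a set" where
  "eps_nbhd \<epsilon> A = {q. \<exists>p\<in>A. dist q p < \<epsilon>}"

definition usc_on :: "'a::metric_space set \<Rightarrow> ('a \<Rightarrow> 'b::metric_space set) \<Rightarrow> bool" where
  "usc_on S F \<longleftrightarrow> (\<forall>x\<in>S. \<forall>\<epsilon>>0. \<exists>\<delta>>0. \<forall>x'\<in>S. dist x' x < \<delta> \<longrightarrow> F x' \<subseteq> eps_nbhd \<epsilon> (F x))"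

end

theory Submission
  imports Defs
begin

text \<open>Both claims hold for any set-valued map with a sequentially closed graph that is locally
  bounded. The graph is closed because the horizontal plane at \<open>\<xi>\<close> is the image of \<open>\<real>\<^sup>2\<^sup>n\<close>
  under a lift depending continuously on \<open>\<xi>\<close>, so the subgradient inequalities pass to the limit.
  Local boundedness comes from testing the inequality for \<open>p\<close> in the horizontal direction
  \<open>p / |p|\<close> at a fixed small step \<open>s\<close>: this gives \<open>s |p| \<le> osc u\<close> on a compact neighbourhood.\<close>

lemma LIMSEQ_if_dist_less_inverse:
  fixes X :: "nat \<Rightarrow> 'a::metric_space"
  assumes dist_X: "\<And>k. dist (X k) x < inverse (Suc k)"
  shows "X \<longlonglongrightarrow> x"
  unfolding lim_sequentially
proof (intro allI impI)
  fix r :: real assume "r > 0"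
  then obtain N where N: "inverse (Suc N) < r"
    using reals_Archimedean by blast
  have "dist (X n) x < r" if "n \<ge> N" for n
  proof -
    have "inverse (real (Suc n)) \<le> inverse (Suc N)"
      using that by (simp add: le_imp_inverse_le)
    then show ?thesis
      using dist_X[of n] N by linarith
  qed
  then show "\<exists>N. \<forall>n\<ge>N. dist (X n) x < r"
    by blast
qed

lemma usc_on_if_closed_graph_locally_bounded:
  fixes F :: "'a::metric_space \<Rightarrow> 'b::heine_borel set"
  assumes graph: "\<And>X x P p. (\<And>k. X k \<in> S) \<Longrightarrow> x \<in> S \<Longrightarrow> X \<longlonglongrightarrow> x
      \<Longrightarrow> (\<And>k. P k \<in> F (X k)) \<Longrightarrow> P \<longlonglongrightarrow> p \<Longrightarrow> p \<in> F x"
    and bdd: "\<And>x. x \<in> S \<Longrightarrow> \<exists>\<delta>>0. bounded (\<Union>x'\<in>S \<inter> ball x \<delta>. F x')"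
  shows "usc_on S F"
  unfolding usc_on_def
proof (intro ballI allI impI)
  fix x and \<epsilon> :: real
  assume x: "x \<in> S" and \<epsilon>: "\<epsilon> > 0"
  obtain \<delta>0 where \<delta>0: "\<delta>0 > 0" and bdd_x: "bounded (\<Union>x'\<in>S \<inter> ball x \<delta>0. F x')"
    using bdd[OF x] by blast
  show "\<exists>\<delta>>0. \<forall>x'\<in>S. dist x' x < \<delta> \<longrightarrow> F x' \<subseteq> eps_nbhd \<epsilon> (F x)"
  proof (rule ccontr)
    assume "\<not> ?thesis"
    then have "\<forall>k::nat. \<exists>x' q. x' \<in> S \<and> dist x' x < min \<delta>0 (inverse (Suc k))
        \<and> q \<in> F x' \<and> q \<notin> eps_nbhd \<epsilon> (F x)"
      using \<delta>0 by (metis inverse_positive_iff_positive min_less_iff_conj of_nat_0_less_iff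
          subsetI zero_less_Suc)
    then obtain X Q where XS: "\<And>k. X k \<in> S"
      and X_near: "\<And>k. dist (X k) x < min \<delta>0 (inverse (Suc k))"
      and Q: "\<And>k. Q k \<in> F (X k)" and Q_far: "\<And>k. Q k \<notin> eps_nbhd \<epsilon> (F x)"
      by metis
    have X_lim: "X \<longlonglongrightarrow> x"
      using X_near by (intro LIMSEQ_if_dist_less_inverse) simp
    have "range Q \<subseteq> (\<Union>x'\<in>S \<inter> ball x \<delta>0. F x')"
      using XS X_near Q by (fastforce simp: dist_commute)
    then obtain r l where r: "strict_mono r" and Qr_lim: "(Q \<circ> r) \<longlonglongrightarrow> l"
      using bounded_imp_convergent_subsequence bounded_subset[OF bdd_x] by blast
    have "l \<in> F x"
      using graph[OF _ x LIMSEQ_subseq_LIMSEQ[OF X_lim r] _ Qr_lim] XS Q by simp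
    moreover obtain N where "dist (Q (r N)) l < \<epsilon>"
      using metric_LIMSEQ_D[OF Qr_lim \<epsilon>] by auto
    ultimately show False
      using Q_far unfolding eps_nbhd_def by blast
  qed
qed

lemma compact_UN_if_closed_graph_locally_bounded:
  fixes F :: "'a::metric_space \<Rightarrow> 'b::heine_borel set"
  assumes graph: "\<And>X x P p. (\<And>k. X k \<in> S) \<Longrightarrow> x \<in> S \<Longrightarrow> X \<longlonglongrightarrow> x
      \<Longrightarrow> (\<And>k. P k \<in> F (X k)) \<Longrightarrow> P \<longlonglongrightarrow> p \<Longrightarrow> p \<in> F x"
    and bdd: "\<And>x. x \<in> S \<Longrightarrow> \<exists>\<delta>>0. bounded (\<Union>x'\<in>S \<inter> ball x \<delta>. F x')"
    and K: "compact K" "K \<subseteq> S"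
  shows "compact (\<Union>x\<in>K. F x)"
proof -
  have "closed (\<Union>x\<in>K. F x)"
    unfolding closed_sequential_limits
  proof (intro allI impI, elim conjE)
    fix P l assume "\<forall>k. P k \<in> (\<Union>x\<in>K. F x)" and P_lim: "P \<longlonglongrightarrow> l"
    then have "\<forall>k. \<exists>x. x \<in> K \<and> P k \<in> F x"
      by blast
    then obtain X where XK: "\<And>k. X k \<in> K" and P: "\<And>k. P k \<in> F (X k)"
      by metis
    obtain x r where x: "x \<in> K" and r: "strict_mono r" and Xr_lim: "(X \<circ> r) \<longlonglongrightarrow> x"
      using seq_compactE[OF compact_imp_seq_compact[OF K(1)]] XK by blast
    have "l \<in> F x"
      using graph[OF _ _ Xr_lim _ LIMSEQ_subseq_LIMSEQ[OF P_lim r]] XK P x K(2) by auto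
    then show "l \<in> (\<Union>x\<in>K. F x)"
      using x by blast
  qed
  moreover have "bounded (\<Union>x\<in>K. F x)"
  proof -
    have "\<forall>x\<in>K. \<exists>d>0. bounded (\<Union>x'\<in>S \<inter> ball x d. F x')"
      using bdd K(2) by blast
    then obtain \<delta> where \<delta>: "\<And>x. x \<in> K \<Longrightarrow> \<delta> x > 0 \<and> bounded (\<Union>x'\<in>S \<inter> ball x (\<delta> x). F x')"
      by (metis bchoice)
    have "K \<subseteq> (\<Union>x\<in>K. ball x (\<delta> x))"
      using \<delta> by force
    then obtain C where C: "C \<subseteq> K" "finite C" "K \<subseteq> (\<Union>c\<in>C. ball c (\<delta> c))"
      using compactE_image[OF K(1), of K "\<lambda>x. ball x (\<delta> x)"] by blast
    have "(\<Union>x\<in>K. F x) \<subseteq> (\<Union>c\<in>C. \<Union>x'\<in>S \<inter> ball c (\<delta> c). F x')"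
      using C(3) K(2) by blast
    moreover have "bounded (\<Union>c\<in>C. \<Union>x'\<in>S \<inter> ball c (\<delta> c). F x')"
      using C(1) \<delta> by (intro bounded_UN C(2)) blast
    ultimately show ?thesis
      by (rule bounded_subset[rotated])
  qed
  ultimately show ?thesis
    by (simp add: compact_eq_bounded_closed)
qed

definition horiz_lift :: "'n::finite heis \<Rightarrow> (real^'n) \<times> (real^'n) \<Rightarrow> 'n heis" where
  "horiz_lift \<xi> v = (fst \<xi> + fst v, fst (snd \<xi>) + snd v,
      snd (snd \<xi>) + 2 * (fst v \<bullet> fst (snd \<xi>) - fst \<xi> \<bullet> snd v))"

lemma Pr1_horiz_lift: "Pr1 (horiz_lift \<xi> v) = Pr1 \<xi> + v"
  by (cases v) (simp add: Pr1_def horiz_lift_def)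

lemma horiz_lift_0 [simp]: "horiz_lift \<xi> 0 = \<xi>"
  by (simp add: horiz_lift_def)

lemma horiz_plane_eq_range_horiz_lift: "horiz_plane \<xi> = range (horiz_lift \<xi>)"
proof (intro equalityI subsetI)
  fix \<eta> assume "\<eta> \<in> horiz_plane \<xi>"
  then have "\<eta> = horiz_lift \<xi> (Pr1 \<eta> - Pr1 \<xi>)"
    by (cases \<xi>, cases \<eta>)
      (auto simp: horiz_plane_def horiz_lift_def Pr1_def inner_diff_left inner_diff_right inner_commute)
  then show "\<eta> \<in> range (horiz_lift \<xi>)"
    by blast
next
  fix \<eta> assume "\<eta> \<in> range (horiz_lift \<xi>)"
  then show "\<eta> \<in> horiz_plane \<xi>"
    by (cases \<xi>) (auto simp: horiz_plane_def horiz_lift_def inner_add_left inner_add_right inner_commute)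
qed

lemma mem_H_subdiff_iff:
  "p \<in> H_subdiff \<Omega> u \<xi> \<longleftrightarrow>
    (\<forall>v. horiz_lift \<xi> v \<in> \<Omega> \<longrightarrow> u \<xi> + p \<bullet> v \<le> u (horiz_lift \<xi> v))"
proof -
  have "(\<forall>\<eta>\<in>\<Omega> \<inter> range (horiz_lift \<xi>). P \<eta>) \<longleftrightarrow> (\<forall>v. horiz_lift \<xi> v \<in> \<Omega> \<longrightarrow> P (horiz_lift \<xi> v))"
    for P by blast
  then show ?thesis
    by (simp add: H_subdiff_def horiz_plane_eq_range_horiz_lift Pr1_horiz_lift)
qed

lemma tendsto_horiz_lift [tendsto_intros]:
  "(f \<longlongrightarrow> \<xi>) F \<Longrightarrow> (g \<longlongrightarrow> v) F \<Longrightarrow> ((\<lambda>k. horiz_lift (f k) (g k)) \<longlongrightarrow> horiz_lift \<xi> v) F"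
  unfolding horiz_lift_def by (intro tendsto_intros)

lemma norm_horiz_lift_diff_le: "norm (horiz_lift \<xi> v - \<xi>) \<le> norm v * (2 + 4 * norm \<xi>)"
proof -
  obtain x y t where \<xi>: "\<xi> = (x, y, t)"
    by (cases \<xi>) auto
  obtain a b where v: "v = (a, b)"
    by fastforce
  have a: "norm a \<le> norm v" and b: "norm b \<le> norm v"
    using norm_fst_le[of a b] norm_snd_le[of b a] v by auto
  have x: "norm x \<le> norm \<xi>" and y: "norm y \<le> norm \<xi>"
    using norm_fst_le[of x "(y, t)"] norm_fst_le[of y t] norm_snd_le[of "(y, t)" x] \<xi> by auto
  have "\<bar>a \<bullet> y - x \<bullet> b\<bar> \<le> norm a * norm y + norm x * norm b"
    using Cauchy_Schwarz_ineq2[of a y] Cauchy_Schwarz_ineq2[of x b] by linarith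
  also have "\<dots> \<le> norm v * norm \<xi> + norm \<xi> * norm v"
    using a b x y by (intro add_mono mult_mono) auto
  finally have twist: "\<bar>a \<bullet> y - x \<bullet> b\<bar> \<le> 2 * (norm v * norm \<xi>)"
    by (simp add: mult.commute)
  have "norm (horiz_lift \<xi> v - \<xi>) = norm (a, b, 2 * (a \<bullet> y - x \<bullet> b))"
    by (simp add: horiz_lift_def \<xi> v)
  also have "\<dots> \<le> norm a + (norm b + \<bar>2 * (a \<bullet> y - x \<bullet> b)\<bar>)"
    using norm_Pair_le[of a "(b, 2 * (a \<bullet> y - x \<bullet> b))"] norm_Pair_le[of b "2 * (a \<bullet> y - x \<bullet> b)"]
    unfolding real_norm_def by (meson add_left_mono order_trans)
  also have "\<dots> \<le> norm v * (2 + 4 * norm \<xi>)"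
    using a b twist by (simp add: abs_mult algebra_simps)
  finally show ?thesis .
qed

lemma H_subdiff_closed_graph:
  fixes \<Omega> :: "'n::finite heis set" and u :: "'n heis \<Rightarrow> real"
  assumes \<Omega>: "open \<Omega>" and u: "continuous_on \<Omega> u"
    and X: "\<And>k. X k \<in> \<Omega>" "\<xi> \<in> \<Omega>" "X \<longlonglongrightarrow> \<xi>"
    and P: "\<And>k. P k \<in> H_subdiff \<Omega> u (X k)" "P \<longlonglongrightarrow> p"
  shows "p \<in> H_subdiff \<Omega> u \<xi>"
  unfolding mem_H_subdiff_iff
proof (intro allI impI)
  fix v assume v: "horiz_lift \<xi> v \<in> \<Omega>"
  have lift_lim: "(\<lambda>k. horiz_lift (X k) v) \<longlonglongrightarrow> horiz_lift \<xi> v"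
    by (intro tendsto_intros X(3))
  have lift_in: "\<forall>\<^sub>F k in sequentially. horiz_lift (X k) v \<in> \<Omega>"
    using topological_tendstoD[OF lift_lim \<Omega> v] .
  have "(\<lambda>k. u (horiz_lift (X k) v)) \<longlonglongrightarrow> u (horiz_lift \<xi> v)"
    using continuous_on_tendsto_compose[OF u lift_lim v lift_in] .
  moreover have "(\<lambda>k. u (X k) + P k \<bullet> v) \<longlonglongrightarrow> u \<xi> + p \<bullet> v"
    using continuous_on_tendsto_compose[OF u X(3,2)] X(1) P(2) by (intro tendsto_intros) auto
  moreover have "\<forall>\<^sub>F k in sequentially. u (X k) + P k \<bullet> v \<le> u (horiz_lift (X k) v)"
    using lift_in by eventually_elim (use P(1) mem_H_subdiff_iff in blast)
  ultimately show "u \<xi> + p \<bullet> v \<le> u (horiz_lift \<xi> v)"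
    by (rule tendsto_le[OF trivial_limit_sequentially])
qed

lemma norm_H_subdiff_le:
  assumes p: "p \<in> H_subdiff \<Omega> u \<xi>" and s: "s \<ge> 0"
    and lifts: "\<And>v. norm v \<le> s \<Longrightarrow> horiz_lift \<xi> v \<in> \<Omega> \<and> u (horiz_lift \<xi> v) \<le> M"
  shows "s * norm p \<le> M - u \<xi>"
proof -
  define v where "v = (s / norm p) *\<^sub>R p"
  have "norm v \<le> s" and pv: "p \<bullet> v = s * norm p"
    using s by (cases "p = 0", simp_all add: v_def dot_square_norm power2_eq_square)
  then have "horiz_lift \<xi> v \<in> \<Omega>" and "u (horiz_lift \<xi> v) \<le> M"
    using lifts by auto
  moreover have "u \<xi> + p \<bullet> v \<le> u (horiz_lift \<xi> v)" if "horiz_lift \<xi> v \<in> \<Omega>"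
    using p that unfolding mem_H_subdiff_iff by blast
  ultimately show ?thesis
    using pv by linarith
qed

lemma H_subdiff_locally_bounded:
  fixes \<Omega> :: "'n::finite heis set" and u :: "'n heis \<Rightarrow> real"
  assumes \<Omega>: "open \<Omega>" and u: "continuous_on \<Omega> u" and "\<xi>0 \<in> \<Omega>"
  shows "\<exists>\<delta>>0. bounded (\<Union>\<xi>\<in>\<Omega> \<inter> ball \<xi>0 \<delta>. H_subdiff \<Omega> u \<xi>)"
proof -
  obtain r where r: "r > 0" "cball \<xi>0 r \<subseteq> \<Omega>"
    using open_contains_cball \<Omega> \<open>\<xi>0 \<in> \<Omega>\<close> by blast
  have "bounded (u ` cball \<xi>0 r)"
    by (intro compact_imp_bounded compact_continuous_image continuous_on_subset[OF u r(2)]) simp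
  then obtain M where M: "\<And>\<eta>. \<eta> \<in> cball \<xi>0 r \<Longrightarrow> \<bar>u \<eta>\<bar> \<le> M"
    unfolding bounded_real by blast
  define C where "C = 2 + 4 * (norm \<xi>0 + r)"
  define s where "s = r / (2 * C)"
  have "C > 0"
    using r(1) by (simp add: C_def add_pos_nonneg)
  then have s: "s > 0" and s_scale: "s * C = r / 2"
    using r(1) by (simp_all add: s_def)
  have p_bound: "norm p \<le> 2 * M / s" if \<xi>: "\<xi> \<in> ball \<xi>0 (r / 2)" and p: "p \<in> H_subdiff \<Omega> u \<xi>" for \<xi> p
  proof -
    have \<xi>_in: "\<xi> \<in> cball \<xi>0 r"
      using \<xi> zero_le_dist[of \<xi>0 \<xi>] unfolding mem_ball mem_cball by linarith
    have "norm \<xi> \<le> norm \<xi>0 + r"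
      using \<xi> r(1) norm_triangle_ineq3[of \<xi> \<xi>0] by (simp add: dist_norm norm_minus_commute)
    have lift_in: "horiz_lift \<xi> v \<in> cball \<xi>0 r" if "norm v \<le> s" for v
    proof -
      have "dist (horiz_lift \<xi> v) \<xi> \<le> norm v * (2 + 4 * norm \<xi>)"
        using norm_horiz_lift_diff_le by (simp add: dist_norm)
      also have "\<dots> \<le> s * C"
        unfolding C_def using that \<open>norm \<xi> \<le> norm \<xi>0 + r\<close> s by (intro mult_mono) auto
      finally show ?thesis
        using \<xi> s_scale dist_triangle[of \<xi>0 "horiz_lift \<xi> v" \<xi>] by (simp add: dist_commute)
    qed
    have "horiz_lift \<xi> v \<in> \<Omega> \<and> u (horiz_lift \<xi> v) \<le> M" if "norm v \<le> s" for v
      using lift_in[OF that] r(2) M[OF lift_in[OF that]] by auto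
    then have "s * norm p \<le> M - u \<xi>"
      by (rule norm_H_subdiff_le[OF p less_imp_le[OF s]])
    then show ?thesis
      using M[OF \<xi>_in] s by (simp add: pos_le_divide_eq mult.commute)
  qed
  have "bounded (\<Union>\<xi>\<in>\<Omega> \<inter> ball \<xi>0 (r / 2). H_subdiff \<Omega> u \<xi>)"
    unfolding bounded_iff by (rule exI[of _ "2 * M / s"]) (use p_bound in blast)
  then show ?thesis
    using r(1) by (intro exI[of _ "r / 2"]) simp
qed

theorem proposition2p2:
  fixes \<Omega> :: "'n::finite heis set" and u :: "'n heis \<Rightarrow> real"
  assumes "open \<Omega>" and "continuous_on \<Omega> u"
    and "\<forall>\<xi>\<in>\<Omega>. H_subdiff \<Omega> u \<xi> \<noteq> {}"
  shows "usc_on \<Omega> (H_subdiff \<Omega> u)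
    \<and> (\<forall>K. compact K \<and> K \<subseteq> \<Omega> \<longrightarrow> compact (\<Union>\<xi>\<in>K. H_subdiff \<Omega> u \<xi>))"
proof -
  note graph = H_subdiff_closed_graph[OF assms(1,2)]
    and bdd = H_subdiff_locally_bounded[OF assms(1,2)]
  have "usc_on \<Omega> (H_subdiff \<Omega> u)"
    by (rule usc_on_if_closed_graph_locally_bounded) (fact graph bdd)+
  moreover have "compact (\<Union>\<xi>\<in>K. H_subdiff \<Omega> u \<xi>)" if "compact K" "K \<subseteq> \<Omega>" for K
    by (rule compact_UN_if_closed_graph_locally_bounded[OF _ _ that]) (fact graph bdd)+
  ultimately show ?thesis
    by blast
qed

end
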